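(* Let $G$ be a path-pairable graph on $n$ vertices with diameter $d \geq 20$. Then $d \leq 6\sqrt{2}\cdot\sqrt{n}$.
   Context: A graph $G$ on $n=2m$ vertices is path-pairable if for every partition of its vertex set into $m$ pairs $\{x_1,y_1\},\dots,\{x_m,y_m\}$ there exist pairwise edge-disjoint paths $P_1,\dots,P_m$ such that $P_i$ joins $x_i$ to $y_i$ for each $i$. The diameter of $G$ is the maximum distance between two vertices of $G$. *)

theory Defs
  imports Complex_Main "HOL-Library.Extended_Nat"
begin

definition simple_graph :: "'a set \<Rightarrow> 'a set set \<Rightarrow> bool" where
  "simple_graph V E \<longleftrightarrow> finite V \<and> (\<forall>e\<in>E. e \<subseteq> V \<and> card e = 2)"

definition is_walk :: "'a set \<Rightarrow> 'a set set \<Rightarrow> 'a list \<Rightarrow> bool" where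
  "is_walk V E p \<longleftrightarrow> p \<noteq> [] \<and> set p \<subseteq> V \<and>
     (\<forall>i. Suc i < length p \<longrightarrow> {p ! i, p ! Suc i} \<in> E)"

definition is_path :: "'a set \<Rightarrow> 'a set set \<Rightarrow> 'a list \<Rightarrow> bool" where
  "is_path V E p \<longleftrightarrow> is_walk V E p \<and> distinct p"

definition path_edges :: "'a list \<Rightarrow> 'a set set" where
  "path_edges p = {{p ! i, p ! Suc i} | i. Suc i < length p}"

definition is_pairing :: "'a set \<Rightarrow> 'a set set \<Rightarrow> bool" where
  "is_pairing V M \<longleftrightarrow> \<Union>M = V \<and> (\<forall>e\<in>M. card e = 2) \<and>
     (\<forall>e\<in>M. \<forall>e'\<in>M. e \<noteq> e' \<longrightarrow> e \<inter> e' = {})"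

definition path_pairable :: "'a set \<Rightarrow> 'a set set \<Rightarrow> bool" where
  "path_pairable V E \<longleftrightarrow> even (card V) \<and>
     (\<forall>M. is_pairing V M \<longrightarrow>
        (\<exists>P. (\<forall>e\<in>M. is_path V E (P e) \<and> {hd (P e), last (P e)} = e) \<and>
             (\<forall>e\<in>M. \<forall>e'\<in>M. e \<noteq> e' \<longrightarrow> path_edges (P e) \<inter> path_edges (P e') = {})))"

text \<open>Distance (\<infinity> if no walk exists) and diameter.\<close>
definition graph_dist :: "'a set \<Rightarrow> 'a set set \<Rightarrow> 'a \<Rightarrow> 'a \<Rightarrow> enat" where
  "graph_dist V E u v =
     (INF p \<in> {p. is_walk V E p \<and> hd p = u \<and> last p = v}. enat (length p - 1))"

definition diameter :: "'a set \<Rightarrow> 'a set set \<Rightarrow> enat" where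
  "diameter V E = (SUP u \<in> V. SUP v \<in> V. graph_dist V E u v)"

end

theory Submission
  imports Defs
begin

text \<open>
  If a vertex set \<open>A\<close> contains at most half of the vertices, pair every vertex of \<open>A\<close> with a
  distinct vertex outside \<open>A\<close> and pair the remaining vertices arbitrarily; the edge-disjoint
  paths joining the straddling pairs each leave \<open>A\<close>, so at least \<open>|A|\<close> edges leave \<open>A\<close>.
  For a ball \<open>B i\<close> of radius \<open>i\<close> these edges all run between the spheres \<open>S i\<close> and
  \<open>S (i + 1)\<close>, so \<open>|B i| \<le> |S i| |S (i + 1)|\<close> while the balls stay small, which forces
  \<open>(r + 1)\<^sup>2 \<le> 4 |B r|\<close>. Around two vertices at distance \<open>d\<close> the balls of radius
  \<open>(d - 1) div 2\<close> are disjoint, so one of them is small; this gives \<open>d\<^sup>2 \<le> 8 n\<close>, stronger than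
  the claimed bound, and the hypothesis \<open>d \<ge> 20\<close> is only needed to exclude \<open>d = 0\<close>.
\<close>

lemma is_walk_iff_successively:
  "is_walk V E p \<longleftrightarrow> p \<noteq> [] \<and> set p \<subseteq> V \<and> successively (\<lambda>x y. {x, y} \<in> E) p"
  by (simp add: is_walk_def successively_conv_nth)

lemma is_walk_singleton [simp]: "is_walk V E [x] \<longleftrightarrow> x \<in> V"
  by (simp add: is_walk_iff_successively)

lemma is_walk_append:
  assumes "is_walk V E p" "is_walk V E q" "last p = hd q"
  shows "is_walk V E (p @ tl q)"
proof -
  obtain y q' where "q = y # q'" using assms(2) by (cases q) (auto simp: is_walk_def)
  then show ?thesis
    using assms by (auto simp: is_walk_iff_successively successively_append_iff successively_Cons)
qed

lemma is_walk_rev: "is_walk V E p \<Longrightarrow> is_walk V E (rev p)"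
  by (simp add: is_walk_iff_successively insert_commute)

lemma graph_dist_le_walk:
  "is_walk V E p \<Longrightarrow> hd p = u \<Longrightarrow> last p = v \<Longrightarrow> graph_dist V E u v \<le> enat (length p - 1)"
  unfolding graph_dist_def by (rule INF_lower) simp

lemma graph_dist_attained:
  assumes "graph_dist V E u v \<noteq> \<infinity>"
  obtains p where "is_walk V E p" "hd p = u" "last p = v" "graph_dist V E u v = enat (length p - 1)"
proof -
  let ?T = "(\<lambda>p. enat (length p - 1)) ` {p. is_walk V E p \<and> hd p = u \<and> last p = v}"
  have dist: "graph_dist V E u v = Inf ?T" by (simp add: graph_dist_def)
  have "?T \<noteq> {}"
  proof
    assume "?T = {}"
    then have "Inf ?T = \<infinity>" by (simp add: Inf_enat_def)
    with assms dist show False by simp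
  qed
  then have "Inf ?T \<in> ?T" unfolding Inf_enat_def by (auto intro: LeastI)
  then show ?thesis using that dist by auto
qed

lemma graph_dist_refl: "x \<in> V \<Longrightarrow> graph_dist V E x x = 0"
  using graph_dist_le_walk[of V E "[x]" x x] by (simp add: zero_enat_def[symmetric])

lemma graph_dist_commute: "graph_dist V E u v = graph_dist V E v u"
proof -
  have le: "graph_dist V E u v \<le> graph_dist V E v u" for u v
  proof (cases "graph_dist V E v u = \<infinity>")
    case False
    then obtain p where p: "is_walk V E p" "hd p = v" "last p = u"
      "graph_dist V E v u = enat (length p - 1)"
      by (rule graph_dist_attained)
    have "p \<noteq> []" using p(1) by (simp add: is_walk_def)
    then show ?thesis
      using graph_dist_le_walk[OF is_walk_rev[OF p(1)]] p by (simp add: hd_rev last_rev)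
  qed simp
  show ?thesis by (rule antisym) (rule le)+
qed

lemma graph_dist_triangle: "graph_dist V E u v \<le> graph_dist V E u x + graph_dist V E x v"
proof (cases "graph_dist V E u x = \<infinity> \<or> graph_dist V E x v = \<infinity>")
  case False
  then have "graph_dist V E u x \<noteq> \<infinity>" "graph_dist V E x v \<noteq> \<infinity>" by auto
  then obtain p q where
    p: "is_walk V E p" "hd p = u" "last p = x" "graph_dist V E u x = enat (length p - 1)" and
    q: "is_walk V E q" "hd q = x" "last q = v" "graph_dist V E x v = enat (length q - 1)"
    by (elim graph_dist_attained)
  have ne: "p \<noteq> []" "q \<noteq> []" using p q by (simp_all add: is_walk_def)
  have "last (p @ tl q) = v"
    using ne p(3) q(2,3) by (cases q) auto
  then have "graph_dist V E u v \<le> enat (length (p @ tl q) - 1)"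
    using graph_dist_le_walk[OF is_walk_append[OF p(1) q(1)]] ne p(2,3) q(2) by simp
  also have "length (p @ tl q) - 1 = (length p - 1) + (length q - 1)"
    using ne by (cases p; cases q) auto
  finally show ?thesis using p(4) q(4) by simp
qed auto

lemma graph_dist_edge_le:
  assumes "simple_graph V E" "{x, y} \<in> E"
  shows "graph_dist V E u y \<le> graph_dist V E u x + 1"
proof -
  have "x \<in> V" "y \<in> V" using assms unfolding simple_graph_def by auto
  then have "is_walk V E [x, y]" using assms(2) by (simp add: is_walk_iff_successively)
  then have "graph_dist V E x y \<le> 1" using graph_dist_le_walk[of V E "[x, y]" x y] by (simp add: one_enat_def)
  then show ?thesis using graph_dist_triangle[of V E u y x] by (meson add_left_mono order_trans)
qed

lemma exists_adjacent_change:
  assumes "p \<noteq> []" "Q (hd p) \<noteq> Q (last p)"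
  shows "\<exists>i. Suc i < length p \<and> Q (p ! i) \<noteq> Q (p ! Suc i)"
proof (rule ccontr)
  assume "\<not> ?thesis"
  then have step: "Suc i < length p \<Longrightarrow> Q (p ! i) = Q (p ! Suc i)" for i by blast
  have const: "i < length p \<Longrightarrow> Q (p ! i) = Q (p ! 0)" for i
    by (induction i) (simp, metis Suc_lessD step)
  have "Q (last p) = Q (p ! 0)"
    using const[of "length p - 1"] assms(1) by (simp add: last_conv_nth)
  then show False using assms by (simp add: hd_conv_nth)
qed

definition cut_edges :: "'a set set \<Rightarrow> 'a set \<Rightarrow> 'a set set" where
  "cut_edges E A = {e\<in>E. \<exists>x y. e = {x, y} \<and> x \<in> A \<and> y \<notin> A}"

lemma doubleton_in_cut_edges:
  assumes "{x, y} \<in> E" "x \<in> A \<longleftrightarrow> y \<notin> A"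
  shows "{x, y} \<in> cut_edges E A"
proof (cases "x \<in> A")
  case True
  then show ?thesis using assms unfolding cut_edges_def by blast
next
  case False
  have "{y, x} \<in> cut_edges E A"
    using False assms unfolding cut_edges_def by (simp add: insert_commute) blast
  then show ?thesis by (simp add: insert_commute)
qed

lemma walk_crosses_cut:
  assumes walk: "is_walk V E p" and ends: "hd p \<in> A \<longleftrightarrow> last p \<notin> A"
  shows "\<exists>e\<in>path_edges p. e \<in> cut_edges E A"
proof -
  have "p \<noteq> []" using walk by (simp add: is_walk_def)
  then obtain i where i: "Suc i < length p" "p ! i \<in> A \<longleftrightarrow> p ! Suc i \<notin> A"
    using exists_adjacent_change[of p "\<lambda>x. x \<in> A"] ends by auto
  then have "{p ! i, p ! Suc i} \<in> E" "{p ! i, p ! Suc i} \<in> path_edges p"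
    using walk unfolding is_walk_def path_edges_def by auto
  moreover have "{p ! i, p ! Suc i} \<in> cut_edges E A"
    using doubleton_in_cut_edges calculation(1) i(2) .
  ultimately show ?thesis by blast
qed

lemma is_pairing_Un:
  assumes M: "is_pairing A M" and N: "is_pairing B N" and disj: "A \<inter> B = {}"
  shows "is_pairing (A \<union> B) (M \<union> N)"
  unfolding is_pairing_def
proof (intro conjI ballI impI)
  show "\<Union> (M \<union> N) = A \<union> B" using M N by (simp add: is_pairing_def)
next
  fix e assume "e \<in> M \<union> N"
  then show "card e = 2" using M N by (auto simp: is_pairing_def)
next
  fix e e' assume e: "e \<in> M \<union> N" and e': "e' \<in> M \<union> N" and "e \<noteq> e'"
  have sub: "e \<subseteq> A" if "e \<in> M" for e using M that unfolding is_pairing_def by blast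
  have sub': "e \<subseteq> B" if "e \<in> N" for e using N that unfolding is_pairing_def by blast
  from e e' consider "e \<in> M" "e' \<in> M" | "e \<in> N" "e' \<in> N" | "e \<in> M" "e' \<in> N" | "e \<in> N" "e' \<in> M"
    by blast
  then show "e \<inter> e' = {}"
  proof cases
    case 1 then show ?thesis using M \<open>e \<noteq> e'\<close> by (simp add: is_pairing_def)
  next
    case 2 then show ?thesis using N \<open>e \<noteq> e'\<close> by (simp add: is_pairing_def)
  next
    case 3 then show ?thesis using sub sub' disj by blast
  next
    case 4 then show ?thesis using sub sub' disj by blast
  qed
qed

lemma is_pairing_doubleton: "x \<noteq> y \<Longrightarrow> is_pairing {x, y} {{x, y}}"
  by (simp add: is_pairing_def)

lemma is_pairing_image_pairs:
  assumes inj: "inj_on f A" and disj: "f ` A \<inter> A = {}"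
  shows "is_pairing (A \<union> f ` A) ((\<lambda>x. {x, f x}) ` A)"
  unfolding is_pairing_def
proof (intro conjI ballI impI)
  have out: "f x \<notin> A" if "x \<in> A" for x using disj that by blast
  show "\<Union> ((\<lambda>x. {x, f x}) ` A) = A \<union> f ` A" by auto
  show "card e = 2" if "e \<in> (\<lambda>x. {x, f x}) ` A" for e
  proof -
    from that obtain x where "x \<in> A" "e = {x, f x}" by blast
    moreover have "f x \<noteq> x" using out \<open>x \<in> A\<close> by metis
    ultimately show ?thesis by simp
  qed
  show "e \<inter> e' = {}" if "e \<in> (\<lambda>x. {x, f x}) ` A" "e' \<in> (\<lambda>x. {x, f x}) ` A" "e \<noteq> e'" for e e'
    using that out inj by (auto dest: inj_onD)
qed

lemma pairing_exists:
  assumes "finite R" "even (card R)"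
  shows "\<exists>M. is_pairing R M"
proof -
  obtain k where "card R = 2 * k" using assms(2) by blast
  with assms(1) show ?thesis
  proof (induction k arbitrary: R)
    case 0
    then show ?case by (intro exI[of _ "{}"]) (simp add: is_pairing_def)
  next
    case (Suc k)
    then obtain x y R' where R: "R = insert x (insert y R')" "x \<notin> insert y R'" "y \<notin> R'"
      "card R' = 2 * k" "finite R'"
      by (auto simp: card_Suc_eq_finite)
    then obtain M' where "is_pairing R' M'" using Suc.IH by blast
    then have "is_pairing ({x, y} \<union> R') ({{x, y}} \<union> M')"
      using R by (intro is_pairing_Un is_pairing_doubleton) auto
    then show ?case using R(1) by auto
  qed
qed

lemma card_separated_pairs_le_card_cut_edges:
  assumes sg: "simple_graph V E" and pp: "path_pairable V E" and M: "is_pairing V M"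
  shows "card {e\<in>M. e \<inter> A \<noteq> {} \<and> \<not> e \<subseteq> A} \<le> card (cut_edges E A)"
proof -
  let ?S = "{e\<in>M. e \<inter> A \<noteq> {} \<and> \<not> e \<subseteq> A}"
  obtain P where P: "\<forall>e\<in>M. is_path V E (P e) \<and> {hd (P e), last (P e)} = e"
    and P_disj: "\<forall>e\<in>M. \<forall>e'\<in>M. e \<noteq> e' \<longrightarrow> path_edges (P e) \<inter> path_edges (P e') = {}"
    using pp M unfolding path_pairable_def by (elim conjE allE impE exE) auto
  have "\<exists>c\<in>path_edges (P e). c \<in> cut_edges E A" if "e \<in> ?S" for e
  proof (rule walk_crosses_cut)
    show "is_walk V E (P e)" using P that by (simp add: is_path_def)
    have split: "x \<in> A \<longleftrightarrow> y \<notin> A" if "{x, y} \<inter> A \<noteq> {}" "\<not> {x, y} \<subseteq> A" for x y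
      using that by auto
    have ends: "{hd (P e), last (P e)} = e" using P that by simp
    show "hd (P e) \<in> A \<longleftrightarrow> last (P e) \<notin> A"
    proof (rule split)
      show "{hd (P e), last (P e)} \<inter> A \<noteq> {}" "\<not> {hd (P e), last (P e)} \<subseteq> A"
        unfolding ends using that by simp_all
    qed
  qed
  then obtain g where g: "\<forall>e\<in>?S. g e \<in> path_edges (P e) \<and> g e \<in> cut_edges E A"
    using bchoice[of ?S "\<lambda>e c. c \<in> path_edges (P e) \<and> c \<in> cut_edges E A"] by blast
  have "inj_on g ?S"
  proof (rule inj_onI)
    fix e e' assume "e \<in> ?S" "e' \<in> ?S" "g e = g e'"
    then have "g e \<in> path_edges (P e)" "g e' \<in> path_edges (P e')" using g by blast+
    then have "g e \<in> path_edges (P e) \<inter> path_edges (P e')" using \<open>g e = g e'\<close> by simp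
    then show "e = e'" using P_disj \<open>e \<in> ?S\<close> \<open>e' \<in> ?S\<close> by auto
  qed
  moreover have "g ` ?S \<subseteq> cut_edges E A" using g by blast
  moreover have "finite (cut_edges E A)"
  proof -
    have "E \<subseteq> Pow V" "finite V" using sg unfolding simple_graph_def by blast+
    then show ?thesis unfolding cut_edges_def by (simp add: finite_subset)
  qed
  ultimately show ?thesis by (rule card_inj_on_le)
qed

lemma card_le_card_cut_edges:
  assumes sg: "simple_graph V E" and pp: "path_pairable V E"
    and A: "A \<subseteq> V" and small: "2 * card A \<le> card V"
  shows "card A \<le> card (cut_edges E A)"
proof -
  have fin: "finite V" "finite A" using sg A by (auto simp: simple_graph_def intro: finite_subset)
  have "card A \<le> card (V - A)" using A fin small by (simp add: card_Diff_subset)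
  with fin obtain f where f: "inj_on f A" "f ` A \<subseteq> V - A"
    using card_le_inj[of A "V - A"] by auto
  let ?MA = "(\<lambda>x. {x, f x}) ` A"
  define R where "R = V - (A \<union> f ` A)"
  have "A \<inter> f ` A = {}" using f(2) by blast
  then have "card (A \<union> f ` A) = 2 * card A" using f(1) fin by (simp add: card_Un_disjoint card_image)
  moreover have "A \<union> f ` A \<subseteq> V" using A f(2) by blast
  ultimately have "card R = card V - 2 * card A"
    using fin unfolding R_def by (simp add: card_Diff_subset)
  then have "even (card R)" using pp small by (simp add: path_pairable_def)
  then obtain MR where MR: "is_pairing R MR"
    using pairing_exists fin unfolding R_def by blast
  have "is_pairing ((A \<union> f ` A) \<union> R) (?MA \<union> MR)"
    using f by (intro is_pairing_Un is_pairing_image_pairs MR) (auto simp: R_def)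
  moreover have "(A \<union> f ` A) \<union> R = V" using A f unfolding R_def by blast
  ultimately have M: "is_pairing V (?MA \<union> MR)" by simp
  have "inj_on (\<lambda>x. {x, f x}) A"
  proof (rule inj_onI)
    fix x y assume "x \<in> A" "y \<in> A" "{x, f x} = {y, f y}"
    moreover have "f y \<notin> A" using f(2) \<open>y \<in> A\<close> by blast
    ultimately show "x = y" by (metis insertE insertI1 singletonD)
  qed
  then have "card A = card ?MA" by (simp add: card_image)
  also have "\<dots> \<le> card {e\<in>?MA \<union> MR. e \<inter> A \<noteq> {} \<and> \<not> e \<subseteq> A}"
  proof (rule card_mono)
    have "finite MR" using MR fin unfolding is_pairing_def R_def by (metis finite_Diff finite_UnionD)
    then show "finite {e\<in>?MA \<union> MR. e \<inter> A \<noteq> {} \<and> \<not> e \<subseteq> A}" using fin by simp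
    show "?MA \<subseteq> {e\<in>?MA \<union> MR. e \<inter> A \<noteq> {} \<and> \<not> e \<subseteq> A}" using f by auto
  qed
  also have "\<dots> \<le> card (cut_edges E A)"
    by (rule card_separated_pairs_le_card_cut_edges[OF sg pp M])
  finally show ?thesis .
qed

lemma four_mult_le_square_add: "4 * (a * b) \<le> ((a::nat) + b)^2"
proof -
  have "4 * (int a * int b) \<le> (int a + int b)^2"
    using zero_le_power2[of "int a - int b"] by (simp add: power2_eq_square algebra_simps)
  then have "int (4 * (a * b)) \<le> int ((a + b)^2)" by simp
  then show ?thesis by (simp only: of_nat_le_iff)
qed

lemma square_le_four_times_partial_sum:
  fixes a :: "nat \<Rightarrow> nat"
  assumes a0: "1 \<le> a 0" and sum_le: "\<And>i. i < n \<Longrightarrow> (\<Sum>k\<le>i. a k) \<le> a i * a (Suc i)"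
  shows "(n + 1)^2 \<le> 4 * (\<Sum>k\<le>n. a k)"
  using sum_le
proof (induction n rule: less_induct)
  case (less n)
  consider "n = 0" | "n = 1" | j where "n = Suc (Suc j)"
    by (metis One_nat_def not0_implies_Suc)
  then show ?case
  proof cases
    case 1
    then show ?thesis using a0 by simp
  next
    case 2
    have "a 0 \<le> a 0 * a 1" using less.prems[of 0] 2 by simp
    then have "1 \<le> a 1" using a0 by (cases "a 1") auto
    then show ?thesis using 2 a0 by (simp add: power2_eq_square)
  next
    case 3
    let ?s = "a (Suc j) + a (Suc (Suc j))"
    have IH: "(Suc j + 1)^2 \<le> 4 * (\<Sum>k\<le>Suc j. a k)" "(j + 1)^2 \<le> 4 * (\<Sum>k\<le>j. a k)"
      by (rule less.IH; use 3 less.prems in simp)+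
    have "(Suc j + 1)^2 \<le> 4 * (a (Suc j) * a (Suc (Suc j)))"
      using IH(1) less.prems[of "Suc j"] 3 by simp
    also have "\<dots> \<le> ?s^2" by (rule four_mult_le_square_add)
    finally have "j + 2 \<le> ?s" using power2_le_imp_le by fastforce
    then have "(j + 1)^2 + 4 * (j + 2) \<le> 4 * (\<Sum>k\<le>j. a k) + 4 * ?s"
      using IH(2) by (intro add_mono) simp_all
    moreover have "(n + 1)^2 = (j + 1)^2 + 4 * (j + 2)" using 3 by (simp add: power2_eq_square)
    moreover have "(\<Sum>k\<le>n. a k) = (\<Sum>k\<le>j. a k) + ?s" using 3 by simp
    ultimately show ?thesis by simp
  qed
qed

definition graph_ball :: "'a set \<Rightarrow> 'a set set \<Rightarrow> 'a \<Rightarrow> nat \<Rightarrow> 'a set" where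
  "graph_ball V E w r = {x\<in>V. graph_dist V E w x \<le> enat r}"

definition graph_sphere :: "'a set \<Rightarrow> 'a set set \<Rightarrow> 'a \<Rightarrow> nat \<Rightarrow> 'a set" where
  "graph_sphere V E w r = {x\<in>V. graph_dist V E w x = enat r}"

lemma graph_ball_Suc:
  "graph_ball V E w (Suc i) = graph_ball V E w i \<union> graph_sphere V E w (Suc i)"
proof -
  have "x \<le> enat (Suc i) \<longleftrightarrow> x \<le> enat i \<or> x = enat (Suc i)" for x
    by (cases x) auto
  then show ?thesis unfolding graph_ball_def graph_sphere_def by auto
qed

lemma card_graph_ball:
  assumes "finite V"
  shows "card (graph_ball V E w r) = (\<Sum>i\<le>r. card (graph_sphere V E w i))"
proof (induction r)
  case 0
  have "graph_ball V E w 0 = graph_sphere V E w 0"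
    unfolding graph_ball_def graph_sphere_def by (auto simp: zero_enat_def[symmetric])
  then show ?case by simp
next
  case (Suc r)
  have "graph_ball V E w r \<inter> graph_sphere V E w (Suc r) = {}"
    unfolding graph_ball_def graph_sphere_def by auto
  moreover have "finite (graph_ball V E w r)" "finite (graph_sphere V E w (Suc r))"
    using assms unfolding graph_ball_def graph_sphere_def by simp_all
  ultimately show ?case using Suc by (simp add: graph_ball_Suc card_Un_disjoint)
qed

lemma cut_edges_graph_ball_subset:
  assumes sg: "simple_graph V E"
  shows "cut_edges E (graph_ball V E w i)
    \<subseteq> (\<lambda>(x, y). {x, y}) ` (graph_sphere V E w i \<times> graph_sphere V E w (Suc i))"
proof
  fix e assume "e \<in> cut_edges E (graph_ball V E w i)"
  then obtain x y where e: "e \<in> E" "e = {x, y}" "x \<in> graph_ball V E w i" "y \<notin> graph_ball V E w i"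
    unfolding cut_edges_def by blast
  have "x \<in> V" "y \<in> V" using e sg unfolding simple_graph_def graph_ball_def by auto
  have "graph_dist V E w y \<le> graph_dist V E w x + 1"
    using graph_dist_edge_le[OF sg] e(1,2) by simp
  moreover have "graph_dist V E w x \<le> enat i" "\<not> graph_dist V E w y \<le> enat i"
    using e(3,4) \<open>y \<in> V\<close> unfolding graph_ball_def by auto
  ultimately have "graph_dist V E w x = enat i \<and> graph_dist V E w y = enat (Suc i)"
    by (cases "graph_dist V E w x"; cases "graph_dist V E w y") (auto simp: one_enat_def)
  then have "(x, y) \<in> graph_sphere V E w i \<times> graph_sphere V E w (Suc i)"
    using \<open>x \<in> V\<close> \<open>y \<in> V\<close> unfolding graph_sphere_def by simp
  then show "e \<in> (\<lambda>(x, y). {x, y}) ` (graph_sphere V E w i \<times> graph_sphere V E w (Suc i))"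
    by (rule rev_image_eqI) (simp add: e(2))
qed

lemma card_cut_edges_graph_ball_le:
  assumes "simple_graph V E"
  shows "card (cut_edges E (graph_ball V E w i))
    \<le> card (graph_sphere V E w i) * card (graph_sphere V E w (Suc i))"
proof -
  have fin: "finite (graph_sphere V E w j)" for j
    using assms unfolding simple_graph_def graph_sphere_def by simp
  have "card (cut_edges E (graph_ball V E w i))
      \<le> card ((\<lambda>(x, y). {x, y}) ` (graph_sphere V E w i \<times> graph_sphere V E w (Suc i)))"
    using cut_edges_graph_ball_subset[OF assms] fin by (intro card_mono) auto
  also have "\<dots> \<le> card (graph_sphere V E w i \<times> graph_sphere V E w (Suc i))"
    using fin by (intro card_image_le) simp
  finally show ?thesis by (simp add: card_cartesian_product)
qed

lemma square_radius_le_card_graph_ball: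
  assumes sg: "simple_graph V E" and pp: "path_pairable V E" and w: "w \<in> V"
    and small: "2 * card (graph_ball V E w r) \<le> card V"
  shows "(r + 1)^2 \<le> 4 * card (graph_ball V E w r)"
proof -
  let ?a = "\<lambda>i. card (graph_sphere V E w i)"
  have fin: "finite V" using sg by (simp add: simple_graph_def)
  have "w \<in> graph_sphere V E w 0"
    using w graph_dist_refl[OF w] unfolding graph_sphere_def by (simp add: zero_enat_def)
  moreover have "finite (graph_sphere V E w 0)" using fin unfolding graph_sphere_def by simp
  ultimately have "1 \<le> ?a 0" by (simp add: Suc_le_eq card_gt_0_iff) blast
  moreover have "(\<Sum>k\<le>i. ?a k) \<le> ?a i * ?a (Suc i)" if "i < r" for i
  proof -
    have "graph_ball V E w i \<subseteq> graph_ball V E w r"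
      using that unfolding graph_ball_def by (auto intro: order_trans)
    then have "card (graph_ball V E w i) \<le> card (graph_ball V E w r)"
      using fin by (intro card_mono) (simp_all add: graph_ball_def)
    then have "card (graph_ball V E w i) \<le> card (cut_edges E (graph_ball V E w i))"
      using small by (intro card_le_card_cut_edges[OF sg pp]) (auto simp: graph_ball_def)
    also have "\<dots> \<le> ?a i * ?a (Suc i)" by (rule card_cut_edges_graph_ball_le[OF sg])
    finally show ?thesis using card_graph_ball[OF fin] by simp
  qed
  ultimately have "(r + 1)^2 \<le> 4 * (\<Sum>k\<le>r. ?a k)"
    by (rule square_le_four_times_partial_sum)
  then show ?thesis using card_graph_ball[OF fin] by simp
qed

lemma SUP_attained_finite:
  fixes f :: "'a \<Rightarrow> 'b::complete_linorder"
  assumes "finite A" "A \<noteq> {}"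
  obtains x where "x \<in> A" "(SUP x\<in>A. f x) = f x"
proof -
  have "Sup (f ` A) \<in> f ` A"
    using assms Max_in[of "f ` A"] Max_Sup[of "f ` A"] by simp
  then show ?thesis using that by auto
qed

lemma diameter_attained:
  assumes "finite V" "V \<noteq> {}"
  obtains u v where "u \<in> V" "v \<in> V" "graph_dist V E u v = diameter V E"
proof -
  obtain u where u: "u \<in> V" "diameter V E = (SUP v\<in>V. graph_dist V E u v)"
    unfolding diameter_def by (rule SUP_attained_finite[OF assms])
  obtain v where "v \<in> V" "(SUP v\<in>V. graph_dist V E u v) = graph_dist V E u v"
    by (rule SUP_attained_finite[OF assms])
  then show ?thesis using that u by simp
qed

lemma graph_balls_disjoint:
  assumes "enat (2 * r) < graph_dist V E u v"
  shows "graph_ball V E u r \<inter> graph_ball V E v r = {}"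
proof (rule ccontr)
  assume "graph_ball V E u r \<inter> graph_ball V E v r \<noteq> {}"
  then obtain x where x: "graph_dist V E u x \<le> enat r" "graph_dist V E v x \<le> enat r"
    unfolding graph_ball_def by blast
  have "graph_dist V E u v \<le> graph_dist V E u x + graph_dist V E v x"
    using graph_dist_triangle[of V E u v x] graph_dist_commute[of V E x v] by simp
  also have "\<dots> \<le> enat (2 * r)" using add_mono[OF x] by (simp add: mult_2)
  finally show False using assms by simp
qed

lemma diameter_square_le:
  assumes sg: "simple_graph V E" and pp: "path_pairable V E"
    and diam: "diameter V E = enat d" and "0 < d"
  shows "d^2 \<le> 8 * card V"
proof -
  have fin: "finite V" using sg by (simp add: simple_graph_def)
  have "V \<noteq> {}" using diam \<open>0 < d\<close> by (auto simp: diameter_def bot_enat_def zero_enat_def)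
  with fin obtain u v where uv: "u \<in> V" "v \<in> V" "graph_dist V E u v = enat d"
    unfolding diam[symmetric] by (rule diameter_attained)
  define r where "r = (d - 1) div 2"
  have "2 * r < d" "d \<le> 2 * (r + 1)" using \<open>0 < d\<close> unfolding r_def by simp_all
  let ?Bu = "graph_ball V E u r" and ?Bv = "graph_ball V E v r"
  have "card ?Bu + card ?Bv = card (?Bu \<union> ?Bv)"
    using graph_balls_disjoint[of r V E u v] uv(3) \<open>2 * r < d\<close> fin
    by (intro card_Un_disjoint[symmetric]) (simp_all add: graph_ball_def)
  also have "\<dots> \<le> card V" using fin by (intro card_mono) (auto simp: graph_ball_def)
  finally have "card ?Bu + card ?Bv \<le> card V" .
  then consider "2 * card ?Bu \<le> card V" | "2 * card ?Bv \<le> card V" by linarith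
  then have "(r + 1)^2 \<le> 2 * card V"
  proof cases
    case 1
    with square_radius_le_card_graph_ball[OF sg pp uv(1) 1] show ?thesis by linarith
  next
    case 2
    with square_radius_le_card_graph_ball[OF sg pp uv(2) 2] show ?thesis by linarith
  qed
  moreover have "d^2 \<le> (2 * (r + 1))^2" using \<open>d \<le> 2 * (r + 1)\<close> by (rule power_mono) simp
  moreover have "(2 * (r + 1))^2 = 4 * (r + 1)^2" by (simp only: power_mult_distrib) simp
  ultimately show ?thesis by linarith
qed

theorem theorem1:
  fixes V :: "'a set" and E :: "'a set set" and d :: nat
  assumes "simple_graph V E"
    and "path_pairable V E"
    and "diameter V E = enat d"
    and "d \<ge> 20"
  shows "real d \<le> 6 * sqrt 2 * sqrt (real (card V))"
proof -
  have "d^2 \<le> 8 * card V" using diameter_square_le[OF assms(1-3)] assms(4) by simp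
  then have "(real d)^2 \<le> 72 * real (card V)" by (simp flip: of_nat_power)
  then have "real d \<le> sqrt (72 * real (card V))" by (rule real_le_rsqrt)
  also have "\<dots> = sqrt (6^2 * 2) * sqrt (real (card V))" by (simp add: real_sqrt_mult)
  also have "\<dots> = 6 * sqrt 2 * sqrt (real (card V))" by (simp only: real_sqrt_mult real_sqrt_abs)
  finally show ?thesis .
qed

end
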